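(* Suppose that for an agent $i$ the local potential $\Phi_i$ admits a stage potential: there is $\varphi_i:\mathcal S\times\mathcal A\to[0,\overline\varphi]$ with $\Phi_i(\theta)=\mathbb E_{\xi^\theta}\left[\sum_{t\ge0}\gamma^t\varphi_i(s(t),a(t))\right]$ for all softmax parameters $\theta$ (with $s(0)\sim\mu$). Then for every integer $\kappa\ge0$ and all $\theta,\theta'$, $$\left|\Phi_i(\theta_{N_i^\kappa},\theta'_{-N_i^\kappa})-\Phi_i(\theta_{N_i^\kappa},\theta_{-N_i^\kappa})\right|\le\frac{\sqrt2\,\overline\varphi}{(1-\gamma)^2}\Big(\sum_{j\in-N_i^\kappa}|\mathcal A_j|\Big)\max_{j\in-N_i^\kappa}\|\theta_j'-\theta_j\|.$$
   Context: Networked Markov game. There are $n$ agents $\mathcal N=\{1,\dots,n\}$ placed at the nodes of an undirected graph $\mathcal G=(\mathcal N,\mathcal E)$ with graph distance $\mathrm{dist}$. For an integer $\kappa\ge0$, $N_i^\kappa=\{j\in\mathcal N:\mathrm{dist}(i,j)\le\kappa\}$ (so $i\in N_i^\kappa$), $\mathcal N_i=N_i^1$, $-N_i^\kappa=\mathcal N\setminus N_i^\kappa$, and $n(\kappa)=\max_i|N_i^\kappa|$. Agent $i$ has a finite local state space $\mathcal S_i$ and a finite local action space $\mathcal A_i$; $\mathcal S=\prod_i\mathcal S_i$, $\mathcal A=\prod_i\mathcal A_i$, and for $I\subseteq\mathcal N$ we write $s_I,a_I,\mathcal S_I,\mathcal A_I$ for the joint states/actions/spaces of the agents in $I$ (the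 subscript $-i$ means $\mathcal N\setminus\{i\}$). The dynamics are $\mathcal P(s'\mid s,a)=\prod_i\mathcal P_i(s_i'\mid s_{\mathcal N_i},a_i)$, the initial distribution is $\mu\in\Delta(\mathcal S)$, and $\gamma\in(0,1)$ is a discount factor. A joint policy $\xi=(\xi_1,\dots,\xi_n)$ acts by $\xi(a\mid s)=\prod_i\xi_i(a_i\mid s_i)$. Softmax policies: for $\theta_i\in\mathbb R^{|\mathcal S_i||\mathcal A_i|}$, $\xi_i^{\theta_i}(a_i\mid s_i)=\exp(\theta_{i,s_i,a_i})/\sum_{a_i'\in\mathcal A_i}\exp(\theta_{i,s_i,a_i'})$; $\theta=(\theta_1,\dots,\theta_n)$, $\xi^\theta=(\xi_1^{\theta_1},\dots,\xi_n^{\theta_n})$. Norms $\|\cdot\|$ are Euclidean; $(\theta_{N_i^\kappa},\theta'_{-N_i^\kappa})$ denotes the parameter equal to $\theta_j$ for $j\in N_i^\kappa$ and $\theta'_j$ otherwise. *)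

theory Defs
  imports "HOL-Analysis.Analysis"
begin

text \<open>The undirected graph is given by a
symmetric edge relation E.
Joint states/actions are functions 'i => 's / 'i => 'a in the product sets.\<close>

definition graph_ball :: "('i \<Rightarrow> 'i \<Rightarrow> bool) \<Rightarrow> nat \<Rightarrow> 'i \<Rightarrow> 'i set" where
  "graph_ball E k i = {j. (i, j) \<in> ({(x, y). x = y \<or> E x y}) ^^ k}"
  \<comment> \<open>N_i^k = {j. dist(i,j) <= k}\<close>

definition joint_space :: "('i \<Rightarrow> 'b set) \<Rightarrow> ('i \<Rightarrow> 'b) set" where
  "joint_space X = PiE UNIV X"

definition softmax :: "('s \<Rightarrow> 'a \<Rightarrow> real) \<Rightarrow> 'a set \<Rightarrow> 's \<Rightarrow> 'a \<Rightarrow> real" where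
  "softmax th Ai s a = exp (th s a) / (\<Sum>b\<in>Ai. exp (th s b))"

definition pol :: "('i::finite \<Rightarrow> 's \<Rightarrow> 'a \<Rightarrow> real) \<Rightarrow> ('i \<Rightarrow> 'a set)
     \<Rightarrow> ('i \<Rightarrow> 's) \<Rightarrow> ('i \<Rightarrow> 'a) \<Rightarrow> real" where
  "pol th A s a = (\<Prod>i\<in>UNIV. softmax (th i) (A i) (s i) (a i))"

definition joint_trans :: "('i::finite \<Rightarrow> ('i \<Rightarrow> 's) \<Rightarrow> 'a \<Rightarrow> 's \<Rightarrow> real)
     \<Rightarrow> ('i \<Rightarrow> 's) \<Rightarrow> ('i \<Rightarrow> 'a) \<Rightarrow> ('i \<Rightarrow> 's) \<Rightarrow> real" where
  "joint_trans P s a s' = (\<Prod>i\<in>UNIV. P i s (a i) (s' i))"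

fun state_dist :: "('i::finite \<Rightarrow> 's set) \<Rightarrow> ('i \<Rightarrow> 'a set)
     \<Rightarrow> ('i \<Rightarrow> ('i \<Rightarrow> 's) \<Rightarrow> 'a \<Rightarrow> 's \<Rightarrow> real) \<Rightarrow> (('i \<Rightarrow> 's) \<Rightarrow> real)
     \<Rightarrow> ('i \<Rightarrow> 's \<Rightarrow> 'a \<Rightarrow> real) \<Rightarrow> nat \<Rightarrow> ('i \<Rightarrow> 's) \<Rightarrow> real" where
  "state_dist S A P mu th 0 s' = mu s'"
| "state_dist S A P mu th (Suc t) s' =
     (\<Sum>s\<in>joint_space S. \<Sum>a\<in>joint_space A.
        state_dist S A P mu th t s * pol th A s a * joint_trans P s a s')"

definition disc_value :: "('i::finite \<Rightarrow> 's set) \<Rightarrow> ('i \<Rightarrow> 'a set)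
     \<Rightarrow> ('i \<Rightarrow> ('i \<Rightarrow> 's) \<Rightarrow> 'a \<Rightarrow> 's \<Rightarrow> real) \<Rightarrow> (('i \<Rightarrow> 's) \<Rightarrow> real) \<Rightarrow> real
     \<Rightarrow> (('i \<Rightarrow> 's) \<Rightarrow> ('i \<Rightarrow> 'a) \<Rightarrow> real)
     \<Rightarrow> ('i \<Rightarrow> 's \<Rightarrow> 'a \<Rightarrow> real) \<Rightarrow> real" where
  "disc_value S A P mu \<gamma> \<phi> th =
     (\<Sum>t. \<gamma> ^ t * (\<Sum>s\<in>joint_space S. \<Sum>a\<in>joint_space A.
          state_dist S A P mu th t s * pol th A s a * \<phi> s a))"

definition param_norm :: "'s set \<Rightarrow> 'a set \<Rightarrow> ('s \<Rightarrow> 'a \<Rightarrow> real) \<Rightarrow> real" where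
  "param_norm Sj Aj th = sqrt (\<Sum>s\<in>Sj. \<Sum>a\<in>Aj. (th s a)\<^sup>2)"

end

theory Submission
  imports Defs
begin

text \<open>Only the agents outside \<open>N\<^sub>i\<^sup>\<kappa>\<close> change their parameters. Softmax is 1-Lipschitz
  from \<open>\<ell>\<^sub>1\<close> logits to \<open>\<ell>\<^sub>1\<close> distributions, and the \<open>\<ell>\<^sub>1\<close> distance of product distributions
  is at most the sum of the factor distances, so at every state the two joint policies are
  \<open>\<delta> = \<Sum>\<^bsub>j\<notin>N\<^sub>i\<^sup>\<kappa>\<^esub> |\<A>\<^sub>j| \<parallel>\<theta>'\<^sub>j - \<theta>\<^sub>j\<parallel>\<close> apart. Each time step adds at most \<open>\<delta>\<close> to the
  \<open>\<ell>\<^sub>1\<close> distance of the state-action distributions, so the stage rewards at time \<open>t\<close> differ by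
  at most \<open>(t + 1) \<delta> \<phi>bar\<close>, and \<open>\<Sum>\<^sub>t (t + 1) \<gamma>\<^sup>t = 1 / (1 - \<gamma>)\<^sup>2\<close>.\<close>

lemma abs_exp_minus_one_le:
  fixes v :: real
  shows "\<bar>exp v - 1\<bar> \<le> \<bar>v\<bar> * (exp v + 1)"
proof (cases "v \<ge> 0")
  case True
  have "exp v - 1 = exp v * (1 - exp (- v))" by (simp add: exp_minus field_simps)
  also have "\<dots> \<le> exp v * v" using exp_ge_add_one_self[of "- v"] by (intro mult_left_mono) auto
  also have "\<dots> \<le> v * (exp v + 1)" using True by (simp add: algebra_simps)
  finally show ?thesis using True by simp
next
  case False
  then have "\<bar>exp v - 1\<bar> = 1 - exp v" by simp
  also have "\<dots> \<le> - v" using exp_ge_add_one_self[of v] by linarith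
  also have "\<dots> \<le> - v * (exp v + 1)"
    using False mult_nonneg_nonneg[of "- v" "exp v"] by (simp add: algebra_simps)
  finally show ?thesis using False by simp
qed

lemma tilted_mass_change_le:
  fixes p u :: real
  assumes "0 < p" "p \<le> 1"
  shows "2 * p * (1 - p) * \<bar>exp u - 1\<bar> \<le> \<bar>u\<bar> * (1 - p + p * exp u)"
proof -
  define z where "z = exp (u / 2)"
  have z_pos: "z > 0" unfolding z_def by simp
  have exp_u: "exp u = z\<^sup>2" unfolding z_def by (simp add: power2_eq_square exp_add[symmetric])
  have "1 - p + p * z\<^sup>2 - p * (1 - p) * (z + 1)\<^sup>2 = ((1 - p) - p * z)\<^sup>2"
    by (simp add: power2_eq_square algebra_simps)
  then have quad: "p * (1 - p) * (z + 1)\<^sup>2 \<le> 1 - p + p * z\<^sup>2"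
    using zero_le_power2[of "(1 - p) - p * z"] by linarith
  have "z\<^sup>2 - 1 = (z - 1) * (z + 1)" by (simp add: power2_eq_square algebra_simps)
  then have "\<bar>z\<^sup>2 - 1\<bar> = \<bar>z - 1\<bar> * (z + 1)" using z_pos by (simp add: abs_mult)
  then have "2 * p * (1 - p) * \<bar>exp u - 1\<bar> = 2 * (p * (1 - p) * (z + 1)) * \<bar>z - 1\<bar>"
    unfolding exp_u by (simp add: algebra_simps)
  also have "\<dots> \<le> 2 * (p * (1 - p) * (z + 1)) * (\<bar>u / 2\<bar> * (z + 1))"
    using abs_exp_minus_one_le[of "u / 2"] assms z_pos unfolding z_def[symmetric]
    by (intro mult_left_mono) auto
  also have "\<dots> = \<bar>u\<bar> * (p * (1 - p) * (z + 1)\<^sup>2)" by (simp add: power2_eq_square field_simps)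
  also have "\<dots> \<le> \<bar>u\<bar> * (1 - p + p * z\<^sup>2)" using quad by (intro mult_left_mono) auto
  finally show ?thesis unfolding exp_u .
qed

lemma softmax_pos: "finite B \<Longrightarrow> B \<noteq> {} \<Longrightarrow> 0 < softmax th B s b"
  unfolding softmax_def by (intro divide_pos_pos sum_pos) auto

lemma sum_softmax: "finite B \<Longrightarrow> B \<noteq> {} \<Longrightarrow> (\<Sum>b\<in>B. softmax th B s b) = 1"
  unfolding softmax_def
  by (metis (no_types) exp_gt_zero less_irrefl sum_divide_distrib divide_self sum_pos)

lemma softmax_cong:
  "(\<And>b. b \<in> B \<Longrightarrow> th' s b = th s b) \<Longrightarrow> b \<in> B \<Longrightarrow> softmax th' B s b = softmax th B s b"
  unfolding softmax_def by (metis (no_types, lifting) sum.cong)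

lemma softmax_le_one: "finite B \<Longrightarrow> b \<in> B \<Longrightarrow> softmax th B s b \<le> 1"
  using sum_softmax[of B th s] member_le_sum[of b B "softmax th B s"] softmax_pos[of B th s]
  by (fastforce simp: less_imp_le)

lemma softmax_raise_one:
  assumes fin: "finite B" and c: "c \<in> B"
    and agree: "\<And>b. b \<in> B - {c} \<Longrightarrow> th' s b = th s b"
  defines "p \<equiv> softmax th B s c" and "u \<equiv> th' s c - th s c"
  shows "softmax th' B s c = p * exp u / (1 - p + p * exp u)"
    and "b \<in> B - {c} \<Longrightarrow> softmax th' B s b = softmax th B s b / (1 - p + p * exp u)"
proof -
  define Z where "Z = (\<Sum>b\<in>B. exp (th s b))"
  have "Z > 0" unfolding Z_def using fin c by (intro sum_pos) auto
  then have pZ: "p * Z = exp (th s c)" unfolding p_def softmax_def Z_def by simp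
  have new_exp: "exp (th' s c) = p * Z * exp u" unfolding pZ u_def by (simp add: exp_diff)
  have "(\<Sum>b\<in>B. exp (th' s b)) = exp (th' s c) + (\<Sum>b\<in>B - {c}. exp (th s b))"
    using fin c agree by (simp add: sum.remove)
  also have "(\<Sum>b\<in>B - {c}. exp (th s b)) = Z - p * Z"
    unfolding pZ using fin c by (simp add: Z_def sum_diff1)
  finally have Z': "(\<Sum>b\<in>B. exp (th' s b)) = Z * (1 - p + p * exp u)"
    unfolding new_exp by (simp add: algebra_simps)
  show "softmax th' B s c = p * exp u / (1 - p + p * exp u)"
    unfolding softmax_def Z' new_exp using \<open>Z > 0\<close> by simp
  show "softmax th' B s b = softmax th B s b / (1 - p + p * exp u)" if "b \<in> B - {c}"
    unfolding softmax_def Z' using that agree by (simp add: Z_def)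
qed

lemma sum_abs_softmax_diff_single_le:
  assumes fin: "finite B" and c: "c \<in> B"
    and agree: "\<And>b. b \<in> B - {c} \<Longrightarrow> th' s b = th s b"
  shows "(\<Sum>b\<in>B. \<bar>softmax th' B s b - softmax th B s b\<bar>) \<le> \<bar>th' s c - th s c\<bar>"
proof -
  define p where "p = softmax th B s c"
  define u where "u = th' s c - th s c"
  define D where "D = 1 - p + p * exp u"
  have B_ne: "B \<noteq> {}" using c by auto
  have p_pos: "0 < p" unfolding p_def using softmax_pos[OF fin B_ne] .
  have "p \<le> 1" unfolding p_def using softmax_le_one[OF fin c] .
  then have D_pos: "D > 0" unfolding D_def using mult_pos_pos[OF p_pos exp_gt_zero, of u] by linarith
  have rest: "(\<Sum>b\<in>B - {c}. softmax th B s b) = 1 - p"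
    using sum_softmax[OF fin B_ne, of th s] fin c by (simp add: sum.remove p_def)
  note raise = softmax_raise_one[where th = th and th' = th' and s = s, OF fin c agree,
      folded p_def u_def D_def]
  have "(\<Sum>b\<in>B. \<bar>softmax th' B s b - softmax th B s b\<bar>)
      = \<bar>p * exp u / D - p\<bar> + (\<Sum>b\<in>B - {c}. \<bar>softmax th' B s b - softmax th B s b\<bar>)"
    using fin c raise(1) by (simp add: sum.remove p_def)
  also have "(\<Sum>b\<in>B - {c}. \<bar>softmax th' B s b - softmax th B s b\<bar>)
      = (\<Sum>b\<in>B - {c}. softmax th B s b * \<bar>1 / D - 1\<bar>)"
  proof (rule sum.cong)
    fix b assume "b \<in> B - {c}"
    then have "softmax th' B s b - softmax th B s b = softmax th B s b * (1 / D - 1)"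
      using raise(2) by (simp add: algebra_simps)
    then show "\<bar>softmax th' B s b - softmax th B s b\<bar> = softmax th B s b * \<bar>1 / D - 1\<bar>"
      using softmax_pos[OF fin B_ne, of th s b] by (simp add: abs_mult)
  qed simp
  also have "\<dots> = (1 - p) * \<bar>1 / D - 1\<bar>" using rest by (simp add: sum_distrib_right[symmetric])
  also have "\<bar>p * exp u / D - p\<bar> + (1 - p) * \<bar>1 / D - 1\<bar> = 2 * p * (1 - p) * \<bar>exp u - 1\<bar> / D"
  proof -
    have "p * exp u / D - p = p * (1 - p) * (exp u - 1) / D" "1 / D - 1 = p * (1 - exp u) / D"
      using D_pos unfolding D_def by (simp_all add: field_simps)
    then show ?thesis using D_pos p_pos \<open>p \<le> 1\<close> by (simp add: abs_mult abs_minus_commute)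
  qed
  also have "\<dots> \<le> \<bar>u\<bar>"
    using tilted_mass_change_le[OF p_pos \<open>p \<le> 1\<close>, of u] D_pos unfolding D_def
    by (simp add: divide_le_eq)
  finally show ?thesis unfolding u_def .
qed

text \<open>Change the logits one action at a time.\<close>
lemma sum_abs_softmax_diff_le:
  assumes fin: "finite B"
  shows "(\<Sum>b\<in>B. \<bar>softmax th' B s b - softmax th B s b\<bar>) \<le> (\<Sum>b\<in>B. \<bar>th' s b - th s b\<bar>)"
proof -
  have "(\<Sum>b\<in>B. \<bar>softmax th' B s b - softmax th B s b\<bar>) \<le> (\<Sum>b\<in>C. \<bar>th' s b - th s b\<bar>)"
    if "finite C" "C \<subseteq> B" "\<And>b. b \<in> B - C \<Longrightarrow> th' s b = th s b" for C th
    using that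
  proof (induction C arbitrary: th rule: finite_induct)
    case empty
    then show ?case using softmax_cong[of B th' s th] by simp
  next
    case (insert c C)
    define z where "z = (\<lambda>s b. if b = c then th' s b else th s b)"
    have tri: "(\<Sum>b\<in>B. \<bar>softmax th' B s b - softmax th B s b\<bar>)
        \<le> (\<Sum>b\<in>B. \<bar>softmax th' B s b - softmax z B s b\<bar> + \<bar>softmax z B s b - softmax th B s b\<bar>)"
      by (intro sum_mono) linarith
    have "(\<Sum>b\<in>B. \<bar>softmax th' B s b - softmax z B s b\<bar>) \<le> (\<Sum>b\<in>C. \<bar>th' s b - z s b\<bar>)"
      using insert.prems by (intro insert.IH) (auto simp: z_def)
    moreover have "(\<Sum>b\<in>B. \<bar>softmax z B s b - softmax th B s b\<bar>) \<le> \<bar>z s c - th s c\<bar>"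
      using insert.prems by (intro sum_abs_softmax_diff_single_le[OF fin]) (auto simp: z_def)
    moreover have "(\<Sum>b\<in>C. \<bar>th' s b - z s b\<bar>) = (\<Sum>b\<in>C. \<bar>th' s b - th s b\<bar>)"
      using insert.hyps(2) unfolding z_def by (intro sum.cong) auto
    ultimately have "(\<Sum>b\<in>B. \<bar>softmax th' B s b - softmax th B s b\<bar>)
        \<le> (\<Sum>b\<in>C. \<bar>th' s b - th s b\<bar>) + \<bar>th' s c - th s c\<bar>"
      using tri unfolding sum.distrib by (simp add: z_def)
    also have "\<dots> = (\<Sum>b\<in>insert c C. \<bar>th' s b - th s b\<bar>)"
      using insert.hyps by simp
    finally show ?case .
  qed
  then show ?thesis using fin by blast
qed

lemma sum_abs_prod_diff_PiE_le:
  fixes f g :: "'i \<Rightarrow> 'b \<Rightarrow> real"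
  assumes "finite I" "\<And>j. j \<in> I \<Longrightarrow> finite (B j)"
    and "\<And>j b. j \<in> I \<Longrightarrow> b \<in> B j \<Longrightarrow> f j b \<ge> 0"
    and "\<And>j b. j \<in> I \<Longrightarrow> b \<in> B j \<Longrightarrow> g j b \<ge> 0"
    and "\<And>j. j \<in> I \<Longrightarrow> (\<Sum>b\<in>B j. f j b) = 1"
    and "\<And>j. j \<in> I \<Longrightarrow> (\<Sum>b\<in>B j. g j b) = 1"
  shows "(\<Sum>a\<in>PiE I B. \<bar>(\<Prod>j\<in>I. f j (a j)) - (\<Prod>j\<in>I. g j (a j))\<bar>)
         \<le> (\<Sum>j\<in>I. \<Sum>b\<in>B j. \<bar>f j b - g j b\<bar>)"
  using assms
proof (induction I rule: finite_induct)
  case empty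
  then show ?case by simp
next
  case (insert x I)
  define F where "F h = (\<Prod>j\<in>I. f j (h j))" for h
  define G where "G h = (\<Prod>j\<in>I. g j (h j))" for h
  have upd: "F (h(x := y)) = F h" "G (h(x := y)) = G h" for h y
    unfolding F_def G_def using insert.hyps by (auto intro!: prod.cong)
  have F_nonneg: "F h \<ge> 0" if "h \<in> PiE I B" for h
    unfolding F_def using that insert.prems by (intro prod_nonneg) (auto simp: PiE_iff)
  have "(\<Sum>h\<in>PiE I B. F h) = (\<Prod>j\<in>I. \<Sum>b\<in>B j. f j b)"
    unfolding F_def using insert by (subst prod_sum_PiE) auto
  then have F_sum: "(\<Sum>h\<in>PiE I B. F h) = 1" using insert.prems by simp
  have IH: "(\<Sum>h\<in>PiE I B. \<bar>F h - G h\<bar>) \<le> (\<Sum>j\<in>I. \<Sum>b\<in>B j. \<bar>f j b - g j b\<bar>)"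
    unfolding F_def G_def using insert.prems by (intro insert.IH) auto
  have "(\<Sum>a\<in>PiE (insert x I) B. \<bar>(\<Prod>j\<in>insert x I. f j (a j)) - (\<Prod>j\<in>insert x I. g j (a j))\<bar>)
      = (\<Sum>(y, h)\<in>B x \<times> PiE I B. \<bar>f x y * F h - g x y * G h\<bar>)"
    unfolding PiE_insert_eq using insert.hyps
    by (subst sum.reindex) (auto simp: inj_combinator F_def[symmetric] G_def[symmetric] upd
        intro!: sum.cong)
  also have "\<dots> = (\<Sum>y\<in>B x. \<Sum>h\<in>PiE I B. \<bar>f x y * F h - g x y * G h\<bar>)"
    by (rule sum.cartesian_product[symmetric])
  also have "\<dots> \<le> (\<Sum>y\<in>B x. \<Sum>h\<in>PiE I B. \<bar>f x y - g x y\<bar> * F h + g x y * \<bar>F h - G h\<bar>)"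
  proof (intro sum_mono)
    fix y h assume "y \<in> B x" "h \<in> PiE I B"
    then have "F h \<ge> 0" "g x y \<ge> 0" using F_nonneg insert.prems by auto
    moreover have "f x y * F h - g x y * G h = (f x y - g x y) * F h + g x y * (F h - G h)"
      by (simp add: algebra_simps)
    ultimately show "\<bar>f x y * F h - g x y * G h\<bar> \<le> \<bar>f x y - g x y\<bar> * F h + g x y * \<bar>F h - G h\<bar>"
      by (metis abs_mult abs_of_nonneg abs_triangle_ineq)
  qed
  also have "\<dots> = (\<Sum>y\<in>B x. \<bar>f x y - g x y\<bar>) * (\<Sum>h\<in>PiE I B. F h)
        + (\<Sum>y\<in>B x. g x y) * (\<Sum>h\<in>PiE I B. \<bar>F h - G h\<bar>)"
    by (simp add: sum.distrib sum_distrib_left[symmetric] sum_distrib_right[symmetric])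
  also have "\<dots> \<le> (\<Sum>y\<in>B x. \<bar>f x y - g x y\<bar>) + (\<Sum>j\<in>I. \<Sum>b\<in>B j. \<bar>f j b - g j b\<bar>)"
    unfolding F_sum using IH insert.prems by simp
  finally show ?case using insert.hyps by simp
qed

lemma abs_le_param_norm:
  assumes "finite Sj" "finite Aj" "s \<in> Sj" "b \<in> Aj"
  shows "\<bar>th s b\<bar> \<le> param_norm Sj Aj th"
proof -
  have "(th s b)\<^sup>2 \<le> (\<Sum>a\<in>Aj. (th s a)\<^sup>2)"
    using assms(2,4) by (intro member_le_sum) auto
  also have "\<dots> \<le> (\<Sum>s\<in>Sj. \<Sum>a\<in>Aj. (th s a)\<^sup>2)"
    using assms(1,3) by (intro member_le_sum[where f = "\<lambda>s. \<Sum>a\<in>Aj. (th s a)\<^sup>2"])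
      (auto intro: sum_nonneg)
  finally show ?thesis unfolding param_norm_def by (metis real_sqrt_abs real_sqrt_le_mono)
qed

lemma sum_abs_pol_diff_le:
  fixes th th' :: "'i::finite \<Rightarrow> 's \<Rightarrow> 'a \<Rightarrow> real"
  assumes S_fin: "\<And>j. finite (S j)" and A_fin: "\<And>j. finite (A j)" and A_ne: "\<And>j. A j \<noteq> {}"
    and s: "s \<in> joint_space S"
  shows "(\<Sum>a\<in>joint_space A. \<bar>pol th' A s a - pol th A s a\<bar>)
       \<le> (\<Sum>j\<in>UNIV. real (card (A j)) * param_norm (S j) (A j) (\<lambda>s a. th' j s a - th j s a))"
proof -
  have "(\<Sum>a\<in>joint_space A. \<bar>pol th' A s a - pol th A s a\<bar>)
      \<le> (\<Sum>j\<in>UNIV. \<Sum>b\<in>A j. \<bar>softmax (th' j) (A j) (s j) b - softmax (th j) (A j) (s j) b\<bar>)"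
    unfolding pol_def joint_space_def
    by (rule sum_abs_prod_diff_PiE_le) (auto simp: A_fin A_ne sum_softmax less_imp_le[OF softmax_pos])
  also have "\<dots> \<le> (\<Sum>j\<in>UNIV. \<Sum>b\<in>A j. \<bar>th' j (s j) b - th j (s j) b\<bar>)"
    by (intro sum_mono sum_abs_softmax_diff_le A_fin)
  also have "\<dots> \<le> (\<Sum>j\<in>UNIV. \<Sum>b\<in>A j. param_norm (S j) (A j) (\<lambda>s a. th' j s a - th j s a))"
    using s by (intro sum_mono abs_le_param_norm[OF S_fin A_fin]) (auto simp: joint_space_def)
  finally show ?thesis by simp
qed

lemma sum_abs_pol_mix_diff_le:
  fixes th th' :: "'i::finite \<Rightarrow> 's \<Rightarrow> 'a \<Rightarrow> real"
  assumes "\<And>j. finite (S j)" "\<And>j. finite (A j)" "\<And>j. A j \<noteq> {}" "s \<in> joint_space S"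
  shows "(\<Sum>a\<in>joint_space A. \<bar>pol (\<lambda>j. if j \<in> N then th j else th' j) A s a - pol th A s a\<bar>)
       \<le> (\<Sum>j\<in>- N. real (card (A j)) * param_norm (S j) (A j) (\<lambda>s a. th' j s a - th j s a))"
proof -
  let ?mix = "\<lambda>j. if j \<in> N then th j else th' j"
  have "(\<Sum>j\<in>UNIV. real (card (A j)) * param_norm (S j) (A j) (\<lambda>s a. ?mix j s a - th j s a))
      = (\<Sum>j\<in>- N. real (card (A j)) * param_norm (S j) (A j) (\<lambda>s a. ?mix j s a - th j s a))"
    by (intro sum.mono_neutral_right) (auto simp: param_norm_def)
  also have "\<dots> = (\<Sum>j\<in>- N. real (card (A j)) * param_norm (S j) (A j) (\<lambda>s a. th' j s a - th j s a))"
    by (intro sum.cong) auto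
  finally show ?thesis
    using sum_abs_pol_diff_le[where S = S and A = A and th' = ?mix and th = th, OF assms] by simp
qed

lemma pol_nonneg: "(\<And>j. finite (A j)) \<Longrightarrow> (\<And>j. A j \<noteq> {}) \<Longrightarrow> pol th A s a \<ge> 0"
  unfolding pol_def by (intro prod_nonneg) (simp add: softmax_pos less_imp_le)

lemma sum_pol:
  assumes "\<And>j. finite (A j)" "\<And>j. A j \<noteq> {}"
  shows "(\<Sum>a\<in>joint_space A. pol th A s a) = 1"
proof -
  have "(\<Sum>a\<in>joint_space A. pol th A s a) = (\<Prod>j\<in>UNIV. \<Sum>b\<in>A j. softmax (th j) (A j) (s j) b)"
    unfolding pol_def joint_space_def using assms by (subst prod_sum_PiE) auto
  then show ?thesis using assms by (simp add: sum_softmax)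
qed

locale finite_mdp =
  fixes S :: "'i::finite \<Rightarrow> 's set" and A :: "'i \<Rightarrow> 'a set"
    and P :: "'i \<Rightarrow> ('i \<Rightarrow> 's) \<Rightarrow> 'a \<Rightarrow> 's \<Rightarrow> real"
    and mu :: "('i \<Rightarrow> 's) \<Rightarrow> real"
  assumes S_fin: "\<And>j. finite (S j)"
    and A_fin: "\<And>j. finite (A j)" and A_ne: "\<And>j. A j \<noteq> {}"
    and P_nonneg: "\<And>j s b s'. s \<in> joint_space S \<Longrightarrow> b \<in> A j \<Longrightarrow> s' \<in> S j \<Longrightarrow> P j s b s' \<ge> 0"
    and P_sum: "\<And>j s b. s \<in> joint_space S \<Longrightarrow> b \<in> A j \<Longrightarrow> (\<Sum>s'\<in>S j. P j s b s') = 1"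
    and mu_nonneg: "\<And>s. s \<in> joint_space S \<Longrightarrow> mu s \<ge> 0"
    and mu_sum: "(\<Sum>s\<in>joint_space S. mu s) = 1"
begin

abbreviation "SS \<equiv> joint_space S"
abbreviation "AA \<equiv> joint_space A"
abbreviation "d th t s \<equiv> state_dist S A P mu th t s"

lemma joint_trans_nonneg:
  "s \<in> SS \<Longrightarrow> a \<in> AA \<Longrightarrow> s' \<in> SS \<Longrightarrow> joint_trans P s a s' \<ge> 0"
  unfolding joint_trans_def using P_nonneg by (intro prod_nonneg) (auto simp: joint_space_def PiE_iff)

lemma sum_joint_trans: "s \<in> SS \<Longrightarrow> a \<in> AA \<Longrightarrow> (\<Sum>s'\<in>SS. joint_trans P s a s') = 1"
proof -
  assume "s \<in> SS" "a \<in> AA"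
  have "(\<Sum>s'\<in>SS. joint_trans P s a s') = (\<Prod>j\<in>UNIV. \<Sum>b\<in>S j. P j s (a j) b)"
    unfolding joint_trans_def joint_space_def using S_fin by (subst prod_sum_PiE) auto
  also have "\<dots> = 1"
    using P_sum \<open>s \<in> SS\<close> \<open>a \<in> AA\<close> by (intro prod.neutral) (auto simp: joint_space_def PiE_iff)
  finally show ?thesis .
qed

lemma state_dist_nonneg: "s \<in> SS \<Longrightarrow> d th t s \<ge> 0"
proof (induction t arbitrary: s)
  case 0
  then show ?case using mu_nonneg by simp
next
  case (Suc t)
  then show ?case
    using pol_nonneg[OF A_fin A_ne] joint_trans_nonneg
    by (auto intro!: sum_nonneg mult_nonneg_nonneg)
qed

lemma sum_next_state:
  "(\<Sum>s'\<in>SS. \<Sum>s\<in>SS. \<Sum>a\<in>AA. f s a * joint_trans P s a s') = (\<Sum>s\<in>SS. \<Sum>a\<in>AA. f s a)"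
proof -
  have "(\<Sum>s'\<in>SS. \<Sum>s\<in>SS. \<Sum>a\<in>AA. f s a * joint_trans P s a s')
      = (\<Sum>s\<in>SS. \<Sum>a\<in>AA. \<Sum>s'\<in>SS. f s a * joint_trans P s a s')"
    by (subst sum.swap) (intro sum.cong refl sum.swap)
  also have "\<dots> = (\<Sum>s\<in>SS. \<Sum>a\<in>AA. f s a * (\<Sum>s'\<in>SS. joint_trans P s a s'))"
    by (simp add: sum_distrib_left)
  also have "\<dots> = (\<Sum>s\<in>SS. \<Sum>a\<in>AA. f s a)" by (simp add: sum_joint_trans)
  finally show ?thesis .
qed

lemma sum_state_dist: "(\<Sum>s\<in>SS. d th t s) = 1"
proof (induction t)
  case 0
  then show ?case using mu_sum by simp
next
  case (Suc t)
  then show ?case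
    by (simp add: sum_next_state sum_distrib_left[symmetric] sum_pol[OF A_fin A_ne])
qed

definition state_gap :: "('i \<Rightarrow> 's \<Rightarrow> 'a \<Rightarrow> real) \<Rightarrow> ('i \<Rightarrow> 's \<Rightarrow> 'a \<Rightarrow> real) \<Rightarrow> nat \<Rightarrow> real" where
  "state_gap th1 th2 t = (\<Sum>s\<in>SS. \<bar>d th1 t s - d th2 t s\<bar>)"

definition state_action_gap ::
    "('i \<Rightarrow> 's \<Rightarrow> 'a \<Rightarrow> real) \<Rightarrow> ('i \<Rightarrow> 's \<Rightarrow> 'a \<Rightarrow> real) \<Rightarrow> nat \<Rightarrow> real" where
  "state_action_gap th1 th2 t =
     (\<Sum>s\<in>SS. \<Sum>a\<in>AA. \<bar>d th1 t s * pol th1 A s a - d th2 t s * pol th2 A s a\<bar>)"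

lemma state_gap_Suc_le: "state_gap th1 th2 (Suc t) \<le> state_action_gap th1 th2 t"
proof -
  let ?x = "\<lambda>s a. d th1 t s * pol th1 A s a - d th2 t s * pol th2 A s a"
  have "state_gap th1 th2 (Suc t) = (\<Sum>s'\<in>SS. \<bar>\<Sum>s\<in>SS. \<Sum>a\<in>AA. ?x s a * joint_trans P s a s'\<bar>)"
    unfolding state_gap_def by (simp add: sum_subtractf[symmetric] algebra_simps)
  also have "\<dots> \<le> (\<Sum>s'\<in>SS. \<Sum>s\<in>SS. \<Sum>a\<in>AA. \<bar>?x s a\<bar> * joint_trans P s a s')"
  proof (intro sum_mono)
    fix s' assume "s' \<in> SS"
    have "\<bar>\<Sum>s\<in>SS. \<Sum>a\<in>AA. ?x s a * joint_trans P s a s'\<bar>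
        \<le> (\<Sum>s\<in>SS. \<Sum>a\<in>AA. \<bar>?x s a * joint_trans P s a s'\<bar>)"
      by (rule order_trans[OF sum_abs sum_mono[OF sum_abs]])
    also have "\<dots> = (\<Sum>s\<in>SS. \<Sum>a\<in>AA. \<bar>?x s a\<bar> * joint_trans P s a s')"
      using joint_trans_nonneg \<open>s' \<in> SS\<close> by (intro sum.cong refl) (simp add: abs_mult)
    finally show "\<bar>\<Sum>s\<in>SS. \<Sum>a\<in>AA. ?x s a * joint_trans P s a s'\<bar>
        \<le> (\<Sum>s\<in>SS. \<Sum>a\<in>AA. \<bar>?x s a\<bar> * joint_trans P s a s')" .
  qed
  also have "\<dots> = state_action_gap th1 th2 t"
    unfolding state_action_gap_def by (rule sum_next_state)
  finally show ?thesis .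
qed

context
  fixes th1 th2 \<delta>
  assumes pol_gap: "\<And>s. s \<in> SS \<Longrightarrow> (\<Sum>a\<in>AA. \<bar>pol th1 A s a - pol th2 A s a\<bar>) \<le> \<delta>"
begin

lemma state_action_gap_le: "state_action_gap th1 th2 t \<le> state_gap th1 th2 t + \<delta>"
proof -
  have "state_action_gap th1 th2 t \<le> (\<Sum>s\<in>SS. \<Sum>a\<in>AA. \<bar>d th1 t s - d th2 t s\<bar> * pol th1 A s a
                  + d th2 t s * \<bar>pol th1 A s a - pol th2 A s a\<bar>)"
    unfolding state_action_gap_def
  proof (intro sum_mono)
    fix s a assume "s \<in> SS"
    have "d th1 t s * pol th1 A s a - d th2 t s * pol th2 A s a
       = (d th1 t s - d th2 t s) * pol th1 A s a + d th2 t s * (pol th1 A s a - pol th2 A s a)"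
      by (simp add: algebra_simps)
    then show "\<bar>d th1 t s * pol th1 A s a - d th2 t s * pol th2 A s a\<bar>
        \<le> \<bar>d th1 t s - d th2 t s\<bar> * pol th1 A s a + d th2 t s * \<bar>pol th1 A s a - pol th2 A s a\<bar>"
      using pol_nonneg[OF A_fin A_ne, where th = th1 and s = s and a = a]
        state_dist_nonneg[OF \<open>s \<in> SS\<close>, of th2 t]
        abs_triangle_ineq[of "(d th1 t s - d th2 t s) * pol th1 A s a"
          "d th2 t s * (pol th1 A s a - pol th2 A s a)"]
      by (simp add: abs_mult)
  qed
  also have "\<dots> = (\<Sum>s\<in>SS. \<bar>d th1 t s - d th2 t s\<bar> * (\<Sum>a\<in>AA. pol th1 A s a)
                  + d th2 t s * (\<Sum>a\<in>AA. \<bar>pol th1 A s a - pol th2 A s a\<bar>))"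
    by (simp add: sum.distrib sum_distrib_left)
  also have "\<dots> \<le> (\<Sum>s\<in>SS. \<bar>d th1 t s - d th2 t s\<bar> + d th2 t s * \<delta>)"
  proof (intro sum_mono)
    fix s assume "s \<in> SS"
    then show "\<bar>d th1 t s - d th2 t s\<bar> * (\<Sum>a\<in>AA. pol th1 A s a)
          + d th2 t s * (\<Sum>a\<in>AA. \<bar>pol th1 A s a - pol th2 A s a\<bar>)
        \<le> \<bar>d th1 t s - d th2 t s\<bar> + d th2 t s * \<delta>"
      using mult_left_mono[OF pol_gap state_dist_nonneg] by (simp add: sum_pol[OF A_fin A_ne])
  qed
  also have "\<dots> = state_gap th1 th2 t + \<delta>"
    unfolding state_gap_def by (simp add: sum.distrib sum_distrib_right[symmetric] sum_state_dist)
  finally show ?thesis .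
qed

lemma state_action_gap_linear: "state_action_gap th1 th2 t \<le> real (Suc t) * \<delta>"
proof -
  have "state_gap th1 th2 t \<le> real t * \<delta>"
  proof (induction t)
    case 0
    then show ?case by (simp add: state_gap_def)
  next
    case (Suc t)
    then show ?case
      using state_gap_Suc_le[of th1 th2 t] state_action_gap_le[of t] by (simp add: algebra_simps)
  qed
  then show ?thesis using state_action_gap_le[of t] by (simp add: algebra_simps)
qed

end

definition stage_expectation ::
    "(('i \<Rightarrow> 's) \<Rightarrow> ('i \<Rightarrow> 'a) \<Rightarrow> real) \<Rightarrow> ('i \<Rightarrow> 's \<Rightarrow> 'a \<Rightarrow> real) \<Rightarrow> nat \<Rightarrow> real" where
  "stage_expectation \<phi> th t = (\<Sum>s\<in>SS. \<Sum>a\<in>AA. d th t s * pol th A s a * \<phi> s a)"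

lemma disc_value_eq_suminf: "disc_value S A P mu \<gamma> \<phi> th = (\<Sum>t. \<gamma> ^ t * stage_expectation \<phi> th t)"
  unfolding disc_value_def stage_expectation_def ..

context
  fixes \<phi> :: "('i \<Rightarrow> 's) \<Rightarrow> ('i \<Rightarrow> 'a) \<Rightarrow> real" and \<phi>bar :: real
  assumes \<phi>_range: "\<And>s a. s \<in> SS \<Longrightarrow> a \<in> AA \<Longrightarrow> 0 \<le> \<phi> s a \<and> \<phi> s a \<le> \<phi>bar"
begin

lemma abs_stage_expectation_le: "\<bar>stage_expectation \<phi> th t\<bar> \<le> \<phi>bar"
proof -
  have weight_nonneg: "0 \<le> d th t s * pol th A s a" if "s \<in> SS" for s a
    using state_dist_nonneg[OF that] pol_nonneg[of A th s a, OF A_fin A_ne] by simp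
  have "0 \<le> stage_expectation \<phi> th t"
    unfolding stage_expectation_def using weight_nonneg \<phi>_range by (auto intro!: sum_nonneg)
  moreover have "stage_expectation \<phi> th t \<le> (\<Sum>s\<in>SS. \<Sum>a\<in>AA. d th t s * pol th A s a * \<phi>bar)"
    unfolding stage_expectation_def using weight_nonneg \<phi>_range
    by (intro sum_mono mult_left_mono) auto
  moreover have "\<dots> = \<phi>bar"
    by (simp add: sum_distrib_left[symmetric] sum_distrib_right[symmetric] sum_pol[OF A_fin A_ne]
        sum_state_dist)
  ultimately show ?thesis by simp
qed

lemma abs_stage_expectation_diff_le:
  "\<bar>stage_expectation \<phi> th1 t - stage_expectation \<phi> th2 t\<bar> \<le> \<phi>bar * state_action_gap th1 th2 t"
proof -
  let ?x = "\<lambda>s a. d th1 t s * pol th1 A s a - d th2 t s * pol th2 A s a"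
  have "\<bar>stage_expectation \<phi> th1 t - stage_expectation \<phi> th2 t\<bar> = \<bar>\<Sum>s\<in>SS. \<Sum>a\<in>AA. ?x s a * \<phi> s a\<bar>"
    unfolding stage_expectation_def by (simp add: sum_subtractf[symmetric] algebra_simps)
  also have "\<dots> \<le> (\<Sum>s\<in>SS. \<Sum>a\<in>AA. \<bar>?x s a * \<phi> s a\<bar>)"
    by (rule order_trans[OF sum_abs sum_mono[OF sum_abs]])
  also have "\<dots> \<le> (\<Sum>s\<in>SS. \<Sum>a\<in>AA. \<phi>bar * \<bar>?x s a\<bar>)"
  proof (intro sum_mono)
    fix s a assume "s \<in> SS" "a \<in> AA"
    then show "\<bar>?x s a * \<phi> s a\<bar> \<le> \<phi>bar * \<bar>?x s a\<bar>"
      using \<phi>_range mult_right_mono[of "\<phi> s a" \<phi>bar "\<bar>?x s a\<bar>"] by (simp add: abs_mult mult.commute)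
  qed
  also have "\<dots> = \<phi>bar * state_action_gap th1 th2 t"
    unfolding state_action_gap_def by (simp add: sum_distrib_left)
  finally show ?thesis .
qed

lemma summable_discounted_stage_expectation:
  "\<bar>\<gamma>\<bar> < 1 \<Longrightarrow> summable (\<lambda>t. \<gamma> ^ t * stage_expectation \<phi> th t)"
proof (rule summable_comparison_test')
  assume "\<bar>\<gamma>\<bar> < 1"
  then show "summable (\<lambda>t. \<phi>bar * \<bar>\<gamma>\<bar> ^ t)" by (intro summable_mult summable_geometric) simp
  show "norm (\<gamma> ^ t * stage_expectation \<phi> th t) \<le> \<phi>bar * \<bar>\<gamma>\<bar> ^ t" for t
    using mult_left_mono[OF abs_stage_expectation_le[of th t], of "\<bar>\<gamma>\<bar> ^ t"]
    by (simp add: abs_mult power_abs mult.commute)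
qed

lemma disc_value_diff_le:
  assumes \<gamma>: "0 \<le> \<gamma>" "\<gamma> < 1"
    and pol_gap: "\<And>s. s \<in> SS \<Longrightarrow> (\<Sum>a\<in>AA. \<bar>pol th1 A s a - pol th2 A s a\<bar>) \<le> \<delta>"
  shows "\<bar>disc_value S A P mu \<gamma> \<phi> th1 - disc_value S A P mu \<gamma> \<phi> th2\<bar> \<le> \<phi>bar * \<delta> / (1 - \<gamma>)\<^sup>2"
proof -
  define h where "h t = \<gamma> ^ t * (stage_expectation \<phi> th1 t - stage_expectation \<phi> th2 t)" for t
  define b where "b t = \<phi>bar * \<delta> * (real (Suc t) * \<gamma> ^ t)" for t
  have b_sums: "b sums (\<phi>bar * \<delta> / (1 - \<gamma>)\<^sup>2)"
  proof -
    have "b sums (\<phi>bar * \<delta> * (1 / (1 - \<gamma>)\<^sup>2))"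
      unfolding b_def using \<gamma> by (intro sums_mult geometric_deriv_sums) simp
    then show ?thesis by simp
  qed
  have "\<phi>bar \<ge> 0" using abs_stage_expectation_le[of th1 0] by linarith
  have h_le_b: "\<bar>h t\<bar> \<le> b t" for t
  proof -
    have "\<bar>h t\<bar> = \<gamma> ^ t * \<bar>stage_expectation \<phi> th1 t - stage_expectation \<phi> th2 t\<bar>"
      unfolding h_def using \<gamma> by (simp add: abs_mult)
    also have "\<dots> \<le> \<gamma> ^ t * (\<phi>bar * state_action_gap th1 th2 t)"
      using \<gamma> by (intro mult_left_mono abs_stage_expectation_diff_le) simp
    also have "\<dots> \<le> \<gamma> ^ t * (\<phi>bar * (real (Suc t) * \<delta>))"
      using \<gamma> \<open>\<phi>bar \<ge> 0\<close> state_action_gap_linear[OF pol_gap, of t]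
      by (intro mult_left_mono) simp_all
    also have "\<dots> = b t" unfolding b_def by (simp add: algebra_simps)
    finally show ?thesis .
  qed
  have "\<bar>\<gamma>\<bar> < 1" using \<gamma> by simp
  then have diff: "disc_value S A P mu \<gamma> \<phi> th1 - disc_value S A P mu \<gamma> \<phi> th2 = suminf h"
    unfolding disc_value_eq_suminf h_def right_diff_distrib
    by (intro suminf_diff summable_discounted_stage_expectation)
  have abs_h: "summable (\<lambda>t. \<bar>h t\<bar>)"
    by (rule summable_comparison_test'[OF sums_summable[OF b_sums]]) (simp add: h_le_b)
  have "\<bar>suminf h\<bar> \<le> (\<Sum>t. \<bar>h t\<bar>)" using abs_h by (rule summable_rabs)
  also have "\<dots> \<le> suminf b" by (rule suminf_le[OF h_le_b abs_h sums_summable[OF b_sums]])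
  also have "\<dots> = \<phi>bar * \<delta> / (1 - \<gamma>)\<^sup>2" using b_sums by (rule sums_unique[symmetric])
  finally show ?thesis unfolding diff .
qed

end

end

lemma sum_mult_le_sum_mult_Max:
  fixes c x :: "'j \<Rightarrow> real"
  assumes "finite J" "\<And>j. j \<in> J \<Longrightarrow> c j \<ge> 0"
  shows "(\<Sum>j\<in>J. c j * x j) \<le> (\<Sum>j\<in>J. c j) * Max (x ` J)"
  unfolding sum_distrib_right using assms by (intro sum_mono mult_left_mono) auto

theorem mainTheorem6:
  fixes E :: "'i::finite \<Rightarrow> 'i \<Rightarrow> bool"
    and S :: "'i \<Rightarrow> 's set" and A :: "'i \<Rightarrow> 'a set"
    and P :: "'i \<Rightarrow> ('i \<Rightarrow> 's) \<Rightarrow> 'a \<Rightarrow> 's \<Rightarrow> real"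
    and mu :: "('i \<Rightarrow> 's) \<Rightarrow> real"
    and \<gamma> :: real and i :: 'i
    and \<phi> :: "('i \<Rightarrow> 's) \<Rightarrow> ('i \<Rightarrow> 'a) \<Rightarrow> real" and \<phi>bar :: real
    and \<Phi> :: "('i \<Rightarrow> 's \<Rightarrow> 'a \<Rightarrow> real) \<Rightarrow> real"
    and \<kappa> :: nat and \<theta> \<theta>' :: "'i \<Rightarrow> 's \<Rightarrow> 'a \<Rightarrow> real"
  assumes E_sym: "\<And>x y. E x y \<Longrightarrow> E y x"
    and S_fin: "\<And>j. finite (S j)" and S_ne: "\<And>j. S j \<noteq> {}"
    and A_fin: "\<And>j. finite (A j)" and A_ne: "\<And>j. A j \<noteq> {}"
    and P_nonneg: "\<And>j s b s'. s \<in> joint_space S \<Longrightarrow> b \<in> A j \<Longrightarrow> s' \<in> S j \<Longrightarrow> P j s b s' \<ge> 0"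
    and P_sum: "\<And>j s b. s \<in> joint_space S \<Longrightarrow> b \<in> A j \<Longrightarrow> (\<Sum>s'\<in>S j. P j s b s') = 1"
    and P_local: "\<And>j s u. s \<in> joint_space S \<Longrightarrow> u \<in> joint_space S \<Longrightarrow>
                    (\<forall>k\<in>graph_ball E 1 j. s k = u k) \<Longrightarrow> P j s = P j u"
    and mu_nonneg: "\<And>s. s \<in> joint_space S \<Longrightarrow> mu s \<ge> 0"
    and mu_sum: "(\<Sum>s\<in>joint_space S. mu s) = 1"
    and \<gamma>_pos: "0 < \<gamma>" and \<gamma>_lt1: "\<gamma> < 1"
    and \<phi>_range: "\<And>s a. s \<in> joint_space S \<Longrightarrow> a \<in> joint_space A \<Longrightarrow>
                      0 \<le> \<phi> s a \<and> \<phi> s a \<le> \<phi>bar"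
    and stage_pot: "\<And>\<eta>. \<Phi> \<eta> = disc_value S A P mu \<gamma> \<phi> \<eta>"
  shows "\<bar>\<Phi> (\<lambda>j. if j \<in> graph_ball E \<kappa> i then \<theta> j else \<theta>' j) - \<Phi> \<theta>\<bar>
     \<le> sqrt 2 * \<phi>bar / (1 - \<gamma>)\<^sup>2
        * (\<Sum>j\<in>- graph_ball E \<kappa> i. real (card (A j)))
        * Max ((\<lambda>j. param_norm (S j) (A j) (\<lambda>s a. \<theta>' j s a - \<theta> j s a)) ` (- graph_ball E \<kappa> i))"
proof -
  interpret finite_mdp S A P mu
    by unfold_locales (fact S_fin A_fin A_ne P_nonneg P_sum mu_nonneg mu_sum)+
  define N where "N = graph_ball E \<kappa> i"
  define pn where "pn j = param_norm (S j) (A j) (\<lambda>s a. \<theta>' j s a - \<theta> j s a)" for j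
  define \<delta> where "\<delta> = (\<Sum>j\<in>- N. real (card (A j)) * pn j)"
  let ?\<theta>N = "\<lambda>j. if j \<in> N then \<theta> j else \<theta>' j"
  have "\<bar>\<Phi> ?\<theta>N - \<Phi> \<theta>\<bar> \<le> \<phi>bar * \<delta> / (1 - \<gamma>)\<^sup>2"
    unfolding stage_pot \<delta>_def pn_def using \<gamma>_pos \<gamma>_lt1
    by (intro disc_value_diff_le[where \<phi> = \<phi>, OF \<phi>_range]
        sum_abs_pol_mix_diff_le[OF S_fin A_fin A_ne]) auto
  also have "\<dots> \<le> \<phi>bar / (1 - \<gamma>)\<^sup>2 * ((\<Sum>j\<in>- N. real (card (A j))) * Max (pn ` (- N)))"
    (is "_ \<le> ?c * ?bound")
  proof -
    have "\<phi>bar \<ge> 0" using abs_stage_expectation_le[where \<phi> = \<phi>, OF \<phi>_range, of \<theta> 0] by linarith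
    moreover have "\<delta> \<le> ?bound"
      unfolding \<delta>_def by (rule sum_mult_le_sum_mult_Max) auto
    ultimately show ?thesis by (simp add: mult_left_mono divide_right_mono)
  qed
  also have "\<dots> \<le> sqrt 2 * (?c * ?bound)"
  proof -
    have "0 \<le> ?c * ?bound" using calculation by (rule order_trans[OF abs_ge_zero])
    then show ?thesis using mult_right_mono[of 1 "sqrt 2" "?c * ?bound"] by simp
  qed
  finally show ?thesis unfolding N_def pn_def by (simp add: mult.assoc)
qed

end
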